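(* Let $b\ge 2$ and $n\ge 0$ be integers. Then $\max \mathrm{Ap}(T_b(n),s_0) = w(s_0-(b-1))$, where $w(r)$ denotes the least element of $T_b(n)$ congruent to $r$ modulo $s_0$.
   Context: For integers $b\ge 2$, $n\ge 0$, $i\ge0$ put $s_i=(b+1)b^{n+i}-1$ and $T_b(n)=\langle\{s_i:i\in\mathbb{N}\}\rangle$ (a numerical semigroup). For a numerical semigroup $S$ and $x\in S\setminus\{0\}$, $\mathrm{Ap}(S,x)=\{s\in S: s-x\notin S\}$. *)

theory Defs
  imports Main "HOL-Number_Theory.Cong"
begin

definition sgen :: "nat \<Rightarrow> nat \<Rightarrow> nat \<Rightarrow> nat" where
  "sgen b n i = (b + 1) * b ^ (n + i) - 1"

inductive_set monoid_gen :: "nat set \<Rightarrow> nat set" for A :: "nat set" where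
  zero: "0 \<in> monoid_gen A"
| add: "a \<in> A \<Longrightarrow> x \<in> monoid_gen A \<Longrightarrow> a + x \<in> monoid_gen A"

definition T :: "nat \<Rightarrow> nat \<Rightarrow> nat set" where
  "T b n = monoid_gen (range (sgen b n))"

text \<open>Apery set Ap(S,x) = {s in S. s - x notin S}, with integer subtraction
  (s - x is not in S whenever s < x).\<close>
definition Apery :: "nat set \<Rightarrow> nat \<Rightarrow> nat set" where
  "Apery S x = {s \<in> S. \<not> (x \<le> s \<and> s - x \<in> S)}"

definition wmin :: "nat set \<Rightarrow> nat \<Rightarrow> nat \<Rightarrow> nat" where
  "wmin S m r = (LEAST t. t \<in> S \<and> [t = r] (mod m))"

end

theory Submission
  imports Defs
begin

text \<open>Put \<open>m = s\<^sub>0\<close>. Since \<open>s\<^sub>i = m b\<^sup>i + (b\<^sup>i - 1)\<close>, the elements of \<open>T\<^sub>b(n)\<close> are the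
  numbers \<open>m N + d\<close> where \<open>N\<close> is a sum of powers of \<open>b\<close> and \<open>d\<close> is \<open>N\<close> minus the number of
  summands. Splitting a summand \<open>b\<^sup>i\<^sup>+\<^sup>1\<close> into \<open>b\<close> copies of \<open>b\<^sup>i\<close> lowers \<open>d\<close> by \<open>b - 1\<close>, so
  for fixed \<open>N\<close> the admissible \<open>d\<close> are closed downwards within the multiples of \<open>b - 1\<close>.
  Hence an Apery element \<open>m N + d\<close> has \<open>d \<le> (b - 1)(m - 1)\<close>, whereas every element of the
  class \<open>-(b - 1)\<close> has \<open>d \<ge> (b - 1)(m - 1)\<close> because \<open>m\<close> is coprime to \<open>b - 1\<close>. Comparing
  the \<open>N\<close>-parts then shows that no Apery element exceeds \<open>w(m - (b - 1))\<close>, which is itself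
  in the Apery set by minimality.\<close>

lemma cong_diff_iff_dvd_add:
  fixes k m t :: nat
  assumes "k \<le> m"
  shows "[t = m - k] (mod m) \<longleftrightarrow> m dvd t + k"
proof -
  have "[t = m - k] (mod m) \<longleftrightarrow> [t + k = m - k + k] (mod m)"
    by (simp only: cong_add_rcancel_nat)
  also have "\<dots> \<longleftrightarrow> [t + k = 0] (mod m)"
    using assms by (simp add: cong_def)
  finally show ?thesis
    by (simp add: cong_0_iff)
qed

lemma pred_dvd_power_pred: "(b - 1) dvd (b ^ k - 1 :: nat)"
proof (cases "b = 0")
  case False
  then have "[b = 1] (mod b - 1)"
    by (simp add: cong_def mod_if)
  then have "[b ^ k = 1 ^ k] (mod b - 1)"
    by (rule cong_pow)
  then have "[b ^ k = 1] (mod b - 1)"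
    by simp
  then show ?thesis
    by (rule cong_to_1_nat)
qed (simp add: power_0_left)

lemma dvd_add_coprime_imp_le:
  fixes a d m :: nat
  assumes "coprime m a" "a dvd d" "m dvd d + a"
  shows "a * (m - 1) \<le> d"
proof -
  obtain j where j: "d = a * j"
    using assms(2) by blast
  have "m dvd a * (j + 1)"
    using assms(3) by (simp add: j algebra_simps)
  then have "m dvd j + 1"
    using assms(1) coprime_dvd_mult_right_iff by blast
  then have "m \<le> j + 1"
    by (rule dvd_imp_le) simp
  then have "m - 1 \<le> j"
    by simp
  then show ?thesis
    by (simp add: j)
qed

inductive pow_decomp :: "nat \<Rightarrow> nat \<Rightarrow> nat \<Rightarrow> bool" for b where
  zero: "pow_decomp b 0 0"
| add_pow: "pow_decomp b N d \<Longrightarrow> pow_decomp b (N + b ^ i) (d + (b ^ i - 1))"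

lemma pow_decomp_add_mult:
  "pow_decomp b N d \<Longrightarrow> pow_decomp b (N + c * b ^ j) (d + c * (b ^ j - 1))"
proof (induction c)
  case (Suc c)
  from pow_decomp.add_pow[OF Suc.IH[OF Suc.prems], of j] show ?case
    by (simp add: add_ac)
qed simp

lemma pow_decomp_add_left: "pow_decomp b N d \<Longrightarrow> pow_decomp b (N + c) d"
  using pow_decomp_add_mult[of b N d c 0] by simp

lemma pred_dvd_defect: "pow_decomp b N d \<Longrightarrow> (b - 1) dvd d"
proof (induction rule: pow_decomp.induct)
  case (add_pow N d i)
  from add_pow.IH pred_dvd_power_pred show ?case
    by (rule dvd_add)
qed simp

lemma pow_decomp_sub_pred:
  "pow_decomp b N d \<Longrightarrow> b - 1 \<le> d \<Longrightarrow> pow_decomp b N (d - (b - 1))"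
proof (induction rule: pow_decomp.induct)
  case (add_pow N d i)
  show ?case
  proof (cases "b - 1 \<le> d")
    case True
    from pow_decomp.add_pow[OF add_pow.IH[OF True], of i] True show ?thesis
      by (simp add: algebra_simps)
  next
    case False
    \<comment> \<open>the new summand \<open>b\<^sup>i\<close> is split into \<open>b\<close> copies of \<open>b\<^sup>i\<^sup>-\<^sup>1\<close>\<close>
    with add_pow.prems obtain j where i: "i = Suc j" and b: "b \<ge> 2"
      by (cases i) auto
    have "b * (b ^ j - 1) = b ^ i - 1 - (b - 1)"
      using b by (simp add: i right_diff_distrib')
    moreover have "b - 1 \<le> b ^ i - 1"
    proof -
      have "1 \<le> b ^ j"
        using b by simp
      then have "b \<le> b ^ i"
        by (simp add: i)
      then show ?thesis
        by simp
    qed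
    ultimately show ?thesis
      using pow_decomp_add_mult[OF add_pow.hyps, of b j] False by (simp add: i)
  qed
qed (simp add: pow_decomp.zero)

lemma pow_decomp_lower_defect:
  assumes "pow_decomp b N d" "(b - 1) dvd d'" "d' \<le> d"
  shows "pow_decomp b N d'"
proof -
  have sub: "pow_decomp b N (d - c * (b - 1))" if "c * (b - 1) \<le> d" for c
    using that
  proof (induction c)
    case (Suc c)
    then have "pow_decomp b N (d - c * (b - 1) - (b - 1))"
      using pow_decomp_sub_pred[of b N "d - c * (b - 1)"] by simp
    then show ?case
      by (simp add: diff_diff_add add.commute)
  qed (simp add: assms(1))
  obtain j j' where "d = (b - 1) * j" "d' = (b - 1) * j'"
    using assms(2) pred_dvd_defect[OF assms(1)] by blast
  with assms(3) sub[of "j - j'"] show ?thesis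
    by (cases "b = 1") (auto simp: diff_mult_distrib mult.commute)
qed

definition pow_semigroup :: "nat \<Rightarrow> nat \<Rightarrow> nat set" where
  "pow_semigroup b m = monoid_gen (range (\<lambda>i. m * b ^ i + (b ^ i - 1)))"

lemma mem_pow_semigroup_iff:
  "x \<in> pow_semigroup b m \<longleftrightarrow> (\<exists>N d. pow_decomp b N d \<and> x = m * N + d)"
proof
  assume "x \<in> pow_semigroup b m"
  then show "\<exists>N d. pow_decomp b N d \<and> x = m * N + d"
    unfolding pow_semigroup_def
  proof (induction rule: monoid_gen.induct)
    case zero
    then show ?case
      using pow_decomp.zero by auto
  next
    case (add a x)
    then obtain N d i where "pow_decomp b N d" "x = m * N + d" "a = m * b ^ i + (b ^ i - 1)"
      by blast
    then have "pow_decomp b (N + b ^ i) (d + (b ^ i - 1)) \<and> a + x = m * (N + b ^ i) + (d + (b ^ i - 1))"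
      using pow_decomp.add_pow by (simp add: algebra_simps)
    then show ?case
      by blast
  qed
next
  assume "\<exists>N d. pow_decomp b N d \<and> x = m * N + d"
  then obtain N d where "pow_decomp b N d" "x = m * N + d"
    by blast
  then show "x \<in> pow_semigroup b m"
  proof (induction arbitrary: x rule: pow_decomp.induct)
    case zero
    then show ?case
      by (simp add: pow_semigroup_def monoid_gen.zero)
  next
    case (add_pow N d i)
    have "(m * b ^ i + (b ^ i - 1)) + (m * N + d) \<in> pow_semigroup b m"
      using add_pow.IH unfolding pow_semigroup_def by (auto intro: monoid_gen.add)
    then show ?case
      by (simp add: add_pow.prems algebra_simps)
  qed
qed

lemma T_eq_pow_semigroup:
  assumes "b \<ge> 1"
  shows "T b n = pow_semigroup b (sgen b n 0)"
proof -
  have "sgen b n i = sgen b n 0 * b ^ i + (b ^ i - 1)" for i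
  proof -
    have "1 \<le> b ^ n" "1 \<le> b ^ i"
      using assms by simp_all
    then have "1 \<le> (b + 1) * b ^ n" "1 \<le> b ^ i"
      by (simp_all add: trans_le_add1)
    then have "((b + 1) * b ^ n) * b ^ i - 1 = ((b + 1) * b ^ n - 1) * b ^ i + (b ^ i - 1)"
      by (simp add: diff_mult_distrib)
    moreover have "sgen b n i = ((b + 1) * b ^ n) * b ^ i - 1"
      unfolding sgen_def power_add by (simp only: mult.assoc)
    ultimately show ?thesis
      by (simp add: sgen_def)
  qed
  then have "sgen b n = (\<lambda>i. sgen b n 0 * b ^ i + (b ^ i - 1))"
    by (rule ext)
  then show ?thesis
    unfolding T_def pow_semigroup_def by (rule arg_cong)
qed

lemma coprime_sgen_pred:
  assumes "b \<ge> 1"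
  shows "coprime (sgen b n 0) (b - 1)"
proof -
  have "[b = 1] (mod b - 1)"
    using assms by (simp add: cong_def mod_if)
  then have "[(b + 1) * b ^ n = (1 + 1) * 1 ^ n] (mod b - 1)"
    by (intro cong_mult cong_add cong_pow) auto
  moreover have "(b + 1) * b ^ n = sgen b n 0 + 1"
    using assms by (simp add: sgen_def)
  ultimately have "[sgen b n 0 + 1 = 1 + 1] (mod b - 1)"
    by simp
  then have "[sgen b n 0 = 1] (mod b - 1)"
    by (simp only: cong_add_rcancel_nat)
  then show ?thesis
    using cong_imp_coprime cong_sym coprime_1_left by blast
qed

lemma Apery_shift_not_mem: "x \<in> Apery S m \<Longrightarrow> y + m = x \<Longrightarrow> y \<notin> S"
  unfolding Apery_def by auto

lemma wmin_mem:
  assumes "t \<in> S" "[t = r] (mod m)"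
  shows "wmin S m r \<in> S" "[wmin S m r = r] (mod m)"
  using LeastI[of "\<lambda>t. t \<in> S \<and> [t = r] (mod m)", OF conjI[OF assms]]
  unfolding wmin_def by auto

lemma wmin_in_Apery:
  assumes "0 < m" "t \<in> S" "[t = r] (mod m)"
  shows "wmin S m r \<in> Apery S m"
proof -
  let ?w = "wmin S m r"
  have "y \<notin> S" if "y + m = ?w" for y
  proof
    assume "y \<in> S"
    moreover have "[y = y + m] (mod m)"
      by (simp add: cong_def)
    then have "[y = r] (mod m)"
      using wmin_mem(2)[OF assms(2,3)] that by (metis cong_trans)
    ultimately have "?w \<le> y"
      unfolding wmin_def by (intro Least_le) simp
    with that assms(1) show False
      by simp
  qed
  then have "\<not> (m \<le> ?w \<and> ?w - m \<in> S)"
    by (metis le_add_diff_inverse2)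
  then show ?thesis
    using wmin_mem(1)[OF assms(2,3)] unfolding Apery_def by simp
qed

lemma Apery_pow_semigroup_defect_le:
  assumes b: "b \<ge> 2" and x: "x \<in> Apery (pow_semigroup b m) m"
    and decomp: "pow_decomp b N d" "x = m * N + d"
  shows "d \<le> (b - 1) * (m - 1)"
proof (rule ccontr)
  assume "\<not> ?thesis"
  moreover obtain k where k: "d = (b - 1) * k"
    using pred_dvd_defect[OF decomp(1)] by blast
  ultimately have "m \<le> k"
    by (cases m) auto
  then have le: "m * (b - 1) \<le> d"
    by (simp add: k mult.commute)
  have "pow_decomp b (N + (b - 2)) (d - m * (b - 1))"
    using pow_decomp_lower_defect[OF pow_decomp_add_left[OF decomp(1)]] pred_dvd_defect[OF decomp(1)] le
    by (simp add: dvd_diff_nat)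
  then have "m * (N + (b - 2)) + (d - m * (b - 1)) \<in> pow_semigroup b m"
    using mem_pow_semigroup_iff by blast
  moreover have "m * (N + (b - 2)) + (d - m * (b - 1)) + m = x"
  proof -
    have "b - 1 = (b - 2) + 1"
      using b by simp
    then have "m * (b - 1) = m * (b - 2) + m"
      by (metis distrib_left mult.right_neutral)
    then show ?thesis
      unfolding distrib_left using decomp(2) le by linarith
  qed
  ultimately show False
    using Apery_shift_not_mem[OF x] by blast
qed

lemma Apery_pow_semigroup_le:
  assumes b: "b \<ge> 2" and x: "x \<in> Apery (pow_semigroup b m) m"
    and y: "pow_decomp b N' d'" "(b - 1) * (m - 1) \<le> d'"
  shows "x \<le> m * N' + d'"
proof -
  have "x \<in> pow_semigroup b m"
    using x by (simp add: Apery_def)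
  then obtain N d where decomp: "pow_decomp b N d" "x = m * N + d"
    using mem_pow_semigroup_iff by blast
  have d_le: "d \<le> d'"
    using Apery_pow_semigroup_defect_le[OF b x decomp] y(2) by linarith
  have "N \<le> N'"
  proof (rule ccontr)
    assume N: "\<not> N \<le> N'"
    then have "pow_decomp b (N - 1) d'"
      using pow_decomp_add_left[OF y(1), of "N - 1 - N'"] by simp
    then have "pow_decomp b (N - 1) d"
      using pow_decomp_lower_defect pred_dvd_defect[OF decomp(1)] d_le by blast
    then have "m * (N - 1) + d \<in> pow_semigroup b m"
      using mem_pow_semigroup_iff by blast
    moreover have "m * (N - 1) + d + m = x"
      using decomp(2) N by (cases N) (simp_all add: algebra_simps)
    ultimately show False
      using Apery_shift_not_mem[OF x] by blast
  qed
  then show ?thesis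
    using decomp(2) d_le by (simp add: add_mono)
qed

theorem Max_Apery_pow_semigroup:
  assumes b: "b \<ge> 2" and coprime: "coprime m (b - 1)" and "b - 1 \<le> m"
  shows "Max (Apery (pow_semigroup b m) m) = wmin (pow_semigroup b m) m (m - (b - 1))"
proof -
  let ?S = "pow_semigroup b m" and ?w = "wmin (pow_semigroup b m) m (m - (b - 1))"
  have m: "0 < m"
    using b assms(3) by linarith
  have class_iff: "[t = m - (b - 1)] (mod m) \<longleftrightarrow> m dvd t + (b - 1)" for t
    using assms(3) by (rule cong_diff_iff_dvd_add)
  \<comment> \<open>\<open>m - 1\<close> copies of the generator \<open>m b + (b - 1)\<close> give an element of the class\<close>
  have "pow_decomp b ((m - 1) * b) ((m - 1) * (b - 1))"
    using pow_decomp_add_mult[OF pow_decomp.zero, where c = "m - 1" and j = 1] by simp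
  then have t0: "m * ((m - 1) * b) + (m - 1) * (b - 1) \<in> ?S"
    using mem_pow_semigroup_iff by blast
  have "(m - 1) * (b - 1) + (b - 1) = m * (b - 1)"
    using m by (cases m) simp_all
  then have "m * ((m - 1) * b) + (m - 1) * (b - 1) + (b - 1) = m * ((m - 1) * b + (b - 1))"
    by (simp only: add.assoc distrib_left)
  then have t0_class: "[m * ((m - 1) * b) + (m - 1) * (b - 1) = m - (b - 1)] (mod m)"
    unfolding class_iff by simp
  have w_Apery: "?w \<in> Apery ?S m"
    using m t0 t0_class by (rule wmin_in_Apery)
  have "?w \<in> ?S" "[?w = m - (b - 1)] (mod m)"
    using t0 t0_class by (rule wmin_mem)+
  then obtain N' d' where decomp: "pow_decomp b N' d'" "?w = m * N' + d'"
    using mem_pow_semigroup_iff by blast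
  have "m dvd d' + (b - 1)"
    using \<open>[?w = m - (b - 1)] (mod m)\<close> unfolding class_iff decomp(2)
    by (simp add: add.assoc dvd_add_right_iff)
  then have "(b - 1) * (m - 1) \<le> d'"
    using dvd_add_coprime_imp_le[OF coprime pred_dvd_defect[OF decomp(1)]] by blast
  then have bound: "x \<le> ?w" if "x \<in> Apery ?S m" for x
    using Apery_pow_semigroup_le[OF b that decomp(1)] decomp(2) by simp
  then have "finite (Apery ?S m)"
    by (meson atMost_iff finite_atMost finite_subset subsetI)
  then show ?thesis
    using w_Apery bound by (intro Max_eqI) auto
qed

theorem mainTheorem8:
  fixes b n :: nat
  assumes "b \<ge> 2"
  shows "Max (Apery (T b n) (sgen b n 0))
           = wmin (T b n) (sgen b n 0) (sgen b n 0 - (b - 1))"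
proof -
  have b: "b \<ge> 1"
    using assms by simp
  have "1 \<le> b ^ n"
    using b by simp
  then have "(b + 1) * 1 \<le> (b + 1) * b ^ n"
    by (rule mult_le_mono2)
  then have "b - 1 \<le> sgen b n 0"
    by (simp add: sgen_def)
  then show ?thesis
    using Max_Apery_pow_semigroup[OF assms coprime_sgen_pred[OF b]] T_eq_pow_semigroup[OF b]
    by simp
qed

end
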